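(* For every set $X$, the function $\theta_X\colon\mathrm L^+(\mathrm L^+(X))\to\mathrm L^+(\mathrm L^+(X))$ is injective. If $X$ is non-empty, then $\theta_X$ is not surjective.
   Context: For a set $X$, $\mathrm L^+(X)=\coprod_{n>0}X^n$ is the set of non-empty finite lists $[x_1,\dots,x_n]$ of elements of $X$. The map $\theta_X$ sends a list of lists $[[x_{1,1},\dots,x_{1,n_1}],\dots,[x_{m,1},\dots,x_{m,n_m}]]$ (with $m,n_i\ge1$) to the list consisting, in order, for $i=1,\dots,m$ and then $j=1,\dots,n_i$, of the lists $[x_{i,j},x_{i+1,1},x_{i+2,1},\dots,x_{m,1}]$; i.e. $[[x_{1,1},x_{2,1},\dots,x_{m,1}],\dots,[x_{1,n_1},x_{2,1},\dots,x_{m,1}],[x_{2,1},x_{3,1},\dots,x_{m,1}],\dots,[x_{2,n_2},x_{3,1},\dots,x_{m,1}],\dots,[x_{m,1}],\dots,[x_{m,n_m}]]$. *)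

theory Defs
  imports Main
begin

definition Lplus :: "'a set \<Rightarrow> 'a list set" where
  "Lplus X = {xs. xs \<noteq> [] \<and> set xs \<subseteq> X}"

text \<open>theta [[x11..x1n1],...,[xm1..xmnm]] lists, for i = 1..m and j = 1..ni,
  the list [xij, x(i+1)1, ..., xm1].\<close>
fun theta :: "'a list list \<Rightarrow> 'a list list" where
  "theta [] = []"
| "theta (xs # xss) = map (\<lambda>x. x # map hd xss) xs @ theta xss"

end

theory Submission
  imports Defs
begin

text \<open>The image under \<open>theta\<close> of the first input list \<open>xs\<close> is a block of lists of length
  one more than the number of remaining input lists, whereas every list produced from the
  remaining ones is at most that long. So the first block is the maximal prefix of output lists
  of that length; it determines \<open>xs\<close>, the rest of the output determines the remaining input by
  induction, and \<open>theta\<close> is injective. Moreover, no output list is longer than the number of input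
  lists, which in turn is at most the length of the output; hence \<open>[[x, x]]\<close> is not in the image.\<close>

lemma append_eq_append_split_by_pred:
  assumes "\<forall>a\<in>set as. P a" "\<forall>a\<in>set as'. P a"
    and "\<forall>b\<in>set bs. \<not> P b" "\<forall>b\<in>set bs'. \<not> P b"
    and "as @ bs = as' @ bs'"
  shows "as = as' \<and> bs = bs'"
proof -
  have "takeWhile P (as @ bs) = as" "takeWhile P (as' @ bs') = as'"
    using assms(1-4) by (auto simp: takeWhile_eq_Nil_iff neq_Nil_conv)
  then show ?thesis
    using assms(5) by auto
qed

lemma length_mem_theta_le: "ys \<in> set (theta xss) \<Longrightarrow> length ys \<le> length xss"
  by (induction xss rule: theta.induct) auto

lemma length_theta_ge: "xss \<in> lists (- {[]}) \<Longrightarrow> length xss \<le> length (theta xss)"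
proof (induction xss rule: theta.induct)
  case (2 xs xss)
  then show ?case by (cases xs) auto
qed simp

lemma length_mem_theta_le_length_theta:
  "xss \<in> lists (- {[]}) \<Longrightarrow> ys \<in> set (theta xss) \<Longrightarrow> length ys \<le> length (theta xss)"
  using length_mem_theta_le[of ys xss] length_theta_ge[of xss] by linarith

lemma theta_inject:
  "xss \<in> lists (- {[]}) \<Longrightarrow> yss \<in> lists (- {[]}) \<Longrightarrow> theta xss = theta yss \<Longrightarrow> xss = yss"
proof (induction xss arbitrary: yss rule: theta.induct)
  case 1
  then show ?case by (cases yss) (auto simp: neq_Nil_conv)
next
  case (2 xs xss)
  obtain x xs' where xs: "xs = x # xs'"
    using "2.prems"(1) by (cases xs) auto
  obtain ys yss' where yss: "yss = ys # yss'"
    using "2.prems" by (cases yss) auto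
  obtain y ys' where ys: "ys = y # ys'"
    using "2.prems"(2) yss by (cases ys) auto
  have same_length: "length xss = length yss'"
    using "2.prems"(3) xs yss ys by (auto dest: map_eq_imp_length_eq)
  let ?P = "\<lambda>l. length l = Suc (length xss)"
  have "map (\<lambda>x. x # map hd xss) xs = map (\<lambda>y. y # map hd yss') ys \<and> theta xss = theta yss'"
    using "2.prems"(3) yss same_length
    by (intro append_eq_append_split_by_pred[where P = ?P])
      (auto dest: length_mem_theta_le)
  moreover from this have "xss = yss'"
    using "2.IH"[of yss'] "2.prems"(1,2) yss by auto
  ultimately have "xs = ys"
    using inj_map_eq_map[of "\<lambda>x. x # map hd xss" xs ys] by (auto simp: inj_def)
  with \<open>xss = yss'\<close> yss show ?case by simp
qed

lemma inj_on_theta: "inj_on theta (lists (- {[]}))"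
  by (rule inj_onI) (rule theta_inject)

lemma singleton_pair_notin_theta_image: "[[x, x]] \<notin> theta ` lists (- {[]})"
proof
  assume "[[x, x]] \<in> theta ` lists (- {[]})"
  then obtain xss where xss: "[[x, x]] = theta xss" "xss \<in> lists (- {[]})"
    by (rule imageE)
  then show False
    using length_mem_theta_le_length_theta[of xss "[x, x]"] by (simp flip: xss(1))
qed

theorem proposition5p2:
  fixes X :: "'a set"
  shows "inj_on theta (Lplus (Lplus X)) \<and>
         (X \<noteq> {} \<longrightarrow> \<not> (Lplus (Lplus X) \<subseteq> theta ` Lplus (Lplus X)))"
proof (intro conjI impI)
  have Lplus_Lplus_subset: "Lplus (Lplus X) \<subseteq> lists (- {[]})"
    by (auto simp: Lplus_def)
  then show "inj_on theta (Lplus (Lplus X))"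
    by (rule inj_on_subset[OF inj_on_theta])
  assume "X \<noteq> {}"
  then obtain x where x: "x \<in> X"
    by blast
  have "[[x, x]] \<notin> theta ` Lplus (Lplus X)"
    using singleton_pair_notin_theta_image
    by (rule contra_subsetD[OF image_mono[OF Lplus_Lplus_subset]])
  moreover have "[[x, x]] \<in> Lplus (Lplus X)"
    using x by (simp add: Lplus_def)
  ultimately show "\<not> Lplus (Lplus X) \<subseteq> theta ` Lplus (Lplus X)"
    by blast
qed

end
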